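(* Let $\mathcal{C}$ be a category and $J$ a directed partially ordered set. Every inverse system $\boldsymbol{X}$ in $\mathcal{C}$ is isomorphic in $pro^J$-$\mathcal{C}$ to a cofinite inverse system $\boldsymbol{X}'$ (i.e. one whose index set is cofinite).
   Context: An inverse system $\boldsymbol{X}=(X_\lambda,p_{\lambda\lambda'},\Lambda)$ in $\mathcal{C}$: $\Lambda$ directed preordered, morphisms $p_{\lambda\lambda'}:X_{\lambda'}\to X_\lambda$ for $\lambda\le\lambda'$, $p_{\lambda\lambda}=1$, $p_{\lambda\lambda'}p_{\lambda'\lambda''}=p_{\lambda\lambda''}$. A directed set is cofinite if each element has finitely many predecessors. A $J$-morphism $(f,f^j_\mu):\boldsymbol{X}\to\boldsymbol{Y}=(Y_\mu,q_{\mu\mu'},M)$: $f:M\to\Lambda$ and $\mathcal{C}$-morphisms $f^j_\mu:X_{f(\mu)}\to Y_\mu$ ($\mu\in M$, $j\in J$) such that for all $\mu\le\mu'$ there exist $\lambda\ge f(\mu),f(\mu')$ and $j_0$ with $f^{j'}_\mu p_{f(\mu)\lambda}=q_{\mu\mu'}f^{j'}_{\mu'}p_{f(\mu')\lambda}$ for all $j'\ge j_0$. Composition $(g,g^j_\nu)(f,f^j_\mu)=(fg,g^j_\nu f^j_{g(\nu)})$, identity $(1_\Lambda,1_{X_\lambda})$. $(f,f^j_\mu)\sim(f',f'^j_\mu)$ iff for every $\mu$ there exist $\lambda\ge f(\mu),f'(\mu)$ and $j_0$ with $f^{j'}_\mu p_{f(\mu)\lambda}=f'^{j'}_\mu p_{f'(\mu)\lambda}$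 for all $j'\ge j_0$. $pro^J$-$\mathcal{C}$ is the resulting quotient category. *)

theory Defs
  imports Main
begin

record ('o, 'm) cat =
  Ob   :: "'o set"
  Ar   :: "'m set"
  Dom  :: "'m \<Rightarrow> 'o"
  Cod  :: "'m \<Rightarrow> 'o"
  Comp :: "'m \<Rightarrow> 'm \<Rightarrow> 'm"   (* Comp C g f = g \<circ> f *)
  Idm  :: "'o \<Rightarrow> 'm"

definition hom :: "('o, 'm) cat \<Rightarrow> 'o \<Rightarrow> 'o \<Rightarrow> 'm \<Rightarrow> bool" where
  "hom C a b f \<longleftrightarrow> f \<in> Ar C \<and> Dom C f = a \<and> Cod C f = b"

definition category :: "('o, 'm) cat \<Rightarrow> bool" where
  "category C \<longleftrightarrow>
     (\<forall>f\<in>Ar C. Dom C f \<in> Ob C \<and> Cod C f \<in> Ob C) \<and>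
     (\<forall>a\<in>Ob C. hom C a a (Idm C a)) \<and>
     (\<forall>f\<in>Ar C. \<forall>g\<in>Ar C. Cod C f = Dom C g \<longrightarrow> hom C (Dom C f) (Cod C g) (Comp C g f)) \<and>
     (\<forall>f\<in>Ar C. Comp C (Idm C (Cod C f)) f = f \<and> Comp C f (Idm C (Dom C f)) = f) \<and>
     (\<forall>f\<in>Ar C. \<forall>g\<in>Ar C. \<forall>h\<in>Ar C. Cod C f = Dom C g \<longrightarrow> Cod C g = Dom C h \<longrightarrow>
        Comp C h (Comp C g f) = Comp C (Comp C h g) f)"

definition directed :: "'a set \<Rightarrow> ('a \<Rightarrow> 'a \<Rightarrow> bool) \<Rightarrow> bool" where
  "directed A le \<longleftrightarrow> A \<noteq> {} \<and> (\<forall>a\<in>A. \<forall>b\<in>A. \<exists>c\<in>A. le a c \<and> le b c)"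

definition directed_preorder :: "'a set \<Rightarrow> ('a \<Rightarrow> 'a \<Rightarrow> bool) \<Rightarrow> bool" where
  "directed_preorder A le \<longleftrightarrow>
     (\<forall>a\<in>A. le a a) \<and> (\<forall>a\<in>A. \<forall>b\<in>A. \<forall>c\<in>A. le a b \<longrightarrow> le b c \<longrightarrow> le a c) \<and>
     directed A le"

definition directed_poset :: "'a set \<Rightarrow> ('a \<Rightarrow> 'a \<Rightarrow> bool) \<Rightarrow> bool" where
  "directed_poset A le \<longleftrightarrow> directed_preorder A le \<and>
     (\<forall>a\<in>A. \<forall>b\<in>A. le a b \<longrightarrow> le b a \<longrightarrow> a = b)"

definition cofinite_set :: "'a set \<Rightarrow> ('a \<Rightarrow> 'a \<Rightarrow> bool) \<Rightarrow> bool" where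
  "cofinite_set A le \<longleftrightarrow> (\<forall>a\<in>A. finite {b\<in>A. le b a})"

record ('i, 'o, 'm) isys =
  Idx  :: "'i set"
  Le   :: "'i \<Rightarrow> 'i \<Rightarrow> bool"
  Obj  :: "'i \<Rightarrow> 'o"
  Bond :: "'i \<Rightarrow> 'i \<Rightarrow> 'm"   (* Bond X l l' : X_l' \<rightarrow> X_l for l \<le> l' *)

definition inverse_system :: "('o, 'm) cat \<Rightarrow> ('i, 'o, 'm) isys \<Rightarrow> bool" where
  "inverse_system C X \<longleftrightarrow>
     directed_preorder (Idx X) (Le X) \<and>
     (\<forall>l\<in>Idx X. Obj X l \<in> Ob C) \<and>
     (\<forall>l\<in>Idx X. \<forall>l'\<in>Idx X. Le X l l' \<longrightarrow> hom C (Obj X l') (Obj X l) (Bond X l l')) \<and>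
     (\<forall>l\<in>Idx X. Bond X l l = Idm C (Obj X l)) \<and>
     (\<forall>l\<in>Idx X. \<forall>l'\<in>Idx X. \<forall>l''\<in>Idx X. Le X l l' \<longrightarrow> Le X l' l'' \<longrightarrow>
        Comp C (Bond X l l') (Bond X l' l'') = Bond X l l'')"

definition cofinite_system :: "('i, 'o, 'm) isys \<Rightarrow> bool" where
  "cofinite_system X \<longleftrightarrow> cofinite_set (Idx X) (Le X)"

definition jmor :: "('o, 'm) cat \<Rightarrow> 'j set \<Rightarrow> ('j \<Rightarrow> 'j \<Rightarrow> bool) \<Rightarrow>
    ('i, 'o, 'm) isys \<Rightarrow> ('k, 'o, 'm) isys \<Rightarrow> ('k \<Rightarrow> 'i) \<Rightarrow> ('j \<Rightarrow> 'k \<Rightarrow> 'm) \<Rightarrow> bool" where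
  "jmor C J leJ X Y f F \<longleftrightarrow>
     (\<forall>\<mu>\<in>Idx Y. f \<mu> \<in> Idx X) \<and>
     (\<forall>j\<in>J. \<forall>\<mu>\<in>Idx Y. hom C (Obj X (f \<mu>)) (Obj Y \<mu>) (F j \<mu>)) \<and>
     (\<forall>\<mu>\<in>Idx Y. \<forall>\<mu>'\<in>Idx Y. Le Y \<mu> \<mu>' \<longrightarrow>
        (\<exists>l\<in>Idx X. Le X (f \<mu>) l \<and> Le X (f \<mu>') l \<and>
          (\<exists>j0\<in>J. \<forall>j'\<in>J. leJ j0 j' \<longrightarrow>
             Comp C (F j' \<mu>) (Bond X (f \<mu>) l) =
             Comp C (Bond Y \<mu> \<mu>') (Comp C (F j' \<mu>') (Bond X (f \<mu>') l)))))"

definition jcomp_idx :: "('k \<Rightarrow> 'i) \<Rightarrow> ('n \<Rightarrow> 'k) \<Rightarrow> ('n \<Rightarrow> 'i)" where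
  "jcomp_idx f g = f \<circ> g"

definition jcomp_mor :: "('o, 'm) cat \<Rightarrow> ('j \<Rightarrow> 'k \<Rightarrow> 'm) \<Rightarrow> ('n \<Rightarrow> 'k) \<Rightarrow> ('j \<Rightarrow> 'n \<Rightarrow> 'm)
    \<Rightarrow> ('j \<Rightarrow> 'n \<Rightarrow> 'm)" where
  "jcomp_mor C F g G = (\<lambda>j \<nu>. Comp C (G j \<nu>) (F j (g \<nu>)))"

definition jid_mor :: "('o, 'm) cat \<Rightarrow> ('i, 'o, 'm) isys \<Rightarrow> ('j \<Rightarrow> 'i \<Rightarrow> 'm)" where
  "jid_mor C X = (\<lambda>j l. Idm C (Obj X l))"

definition jequiv :: "('o, 'm) cat \<Rightarrow> 'j set \<Rightarrow> ('j \<Rightarrow> 'j \<Rightarrow> bool) \<Rightarrow>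
    ('i, 'o, 'm) isys \<Rightarrow> ('k, 'o, 'm) isys \<Rightarrow> ('k \<Rightarrow> 'i) \<Rightarrow> ('j \<Rightarrow> 'k \<Rightarrow> 'm)
    \<Rightarrow> ('k \<Rightarrow> 'i) \<Rightarrow> ('j \<Rightarrow> 'k \<Rightarrow> 'm) \<Rightarrow> bool" where
  "jequiv C J leJ X Y f F f' F' \<longleftrightarrow>
     (\<forall>\<mu>\<in>Idx Y. \<exists>l\<in>Idx X. Le X (f \<mu>) l \<and> Le X (f' \<mu>) l \<and>
        (\<exists>j0\<in>J. \<forall>j'\<in>J. leJ j0 j' \<longrightarrow>
           Comp C (F j' \<mu>) (Bond X (f \<mu>) l) = Comp C (F' j' \<mu>) (Bond X (f' \<mu>) l)))"

definition iso_proJ :: "('o, 'm) cat \<Rightarrow> 'j set \<Rightarrow> ('j \<Rightarrow> 'j \<Rightarrow> bool) \<Rightarrow>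
    ('i, 'o, 'm) isys \<Rightarrow> ('k, 'o, 'm) isys \<Rightarrow> bool" where
  "iso_proJ C J leJ X Y \<longleftrightarrow>
     (\<exists>f F g G. jmor C J leJ X Y f F \<and> jmor C J leJ Y X g G \<and>
        jequiv C J leJ X X (jcomp_idx f g) (jcomp_mor C F g G) id (jid_mor C X) \<and>
        jequiv C J leJ Y Y (jcomp_idx g f) (jcomp_mor C G f F) id (jid_mor C Y))"

end

theory Submission
  imports Defs "HOL-Library.Sublist"
begin

text \<open>Index the new system by the nonempty finite lists of indices of \<open>X\<close>, where
  \<open>xs \<le> ys\<close> means that \<open>xs\<close> is a subsequence of \<open>ys\<close> and \<open>last xs \<le> last ys\<close> in \<open>X\<close>,
  and give it the terms and bonds of \<open>X\<close> at the last entries. A list has only finitely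
  many subsequences, so the new index set is cofinite. Taking the last entry and forming
  singleton lists are monotone maps \<open>p\<close>, \<open>s\<close> with \<open>p (s \<lambda>) = \<lambda>\<close> and \<open>s (p \<mu>) \<le> \<mu>\<close>; with
  identity components they give mutually inverse morphisms of pro-\<open>J\<close>-\<open>C\<close>.\<close>

lemma category_Idm_hom: "category C \<Longrightarrow> a \<in> Ob C \<Longrightarrow> hom C a a (Idm C a)"
  unfolding category_def by blast

lemma category_comp_Idm_left: "category C \<Longrightarrow> hom C a b f \<Longrightarrow> Comp C (Idm C b) f = f"
  unfolding category_def hom_def by metis

lemma category_comp_Idm_right: "category C \<Longrightarrow> hom C a b f \<Longrightarrow> Comp C f (Idm C a) = f"
  unfolding category_def hom_def by metis

context
  fixes C :: "('o, 'm) cat" and X :: "('i, 'o, 'm) isys"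
  assumes X: "inverse_system C X"
begin

lemma inverse_system_Le_refl: "l \<in> Idx X \<Longrightarrow> Le X l l"
  using X unfolding inverse_system_def directed_preorder_def by blast

lemma inverse_system_Le_trans:
  "l \<in> Idx X \<Longrightarrow> l' \<in> Idx X \<Longrightarrow> l'' \<in> Idx X \<Longrightarrow> Le X l l' \<Longrightarrow> Le X l' l'' \<Longrightarrow> Le X l l''"
  using X unfolding inverse_system_def directed_preorder_def by blast

lemma inverse_system_Idx_nonempty: "Idx X \<noteq> {}"
  using X unfolding inverse_system_def directed_preorder_def directed_def by blast

lemma inverse_system_upper_bound:
  "l \<in> Idx X \<Longrightarrow> l' \<in> Idx X \<Longrightarrow> \<exists>u\<in>Idx X. Le X l u \<and> Le X l' u"
  using X unfolding inverse_system_def directed_preorder_def directed_def by blast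

lemma inverse_system_Obj: "l \<in> Idx X \<Longrightarrow> Obj X l \<in> Ob C"
  using X unfolding inverse_system_def by blast

lemma inverse_system_Bond_hom:
  "l \<in> Idx X \<Longrightarrow> l' \<in> Idx X \<Longrightarrow> Le X l l' \<Longrightarrow> hom C (Obj X l') (Obj X l) (Bond X l l')"
  using X unfolding inverse_system_def by blast

lemma inverse_system_Bond_refl: "l \<in> Idx X \<Longrightarrow> Bond X l l = Idm C (Obj X l)"
  using X unfolding inverse_system_def by blast

lemma inverse_system_Bond_comp:
  "l \<in> Idx X \<Longrightarrow> l' \<in> Idx X \<Longrightarrow> l'' \<in> Idx X \<Longrightarrow> Le X l l' \<Longrightarrow> Le X l' l'' \<Longrightarrow>
    Comp C (Bond X l l') (Bond X l' l'') = Bond X l l''"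
  using X unfolding inverse_system_def by blast

end

lemma directed_poset_nonempty: "directed_poset J leJ \<Longrightarrow> J \<noteq> {}"
  unfolding directed_poset_def directed_preorder_def directed_def by blast

lemma bex_threshold_const: "J \<noteq> {} \<Longrightarrow> P \<Longrightarrow> \<exists>j0\<in>J. \<forall>j'\<in>J. R j0 j' \<longrightarrow> P"
  by blast

definition reindexing :: "('i, 'o, 'm) isys \<Rightarrow> ('k, 'o, 'm) isys \<Rightarrow> ('k \<Rightarrow> 'i) \<Rightarrow> bool" where
  "reindexing X Y p \<longleftrightarrow>
     (\<forall>\<mu>\<in>Idx Y. p \<mu> \<in> Idx X \<and> Obj Y \<mu> = Obj X (p \<mu>)) \<and>
     (\<forall>\<mu>\<in>Idx Y. \<forall>\<mu>'\<in>Idx Y. Le Y \<mu> \<mu>' \<longrightarrow> Le X (p \<mu>) (p \<mu>') \<and> Bond Y \<mu> \<mu>' = Bond X (p \<mu>) (p \<mu>'))"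

lemma jmor_reindexing:
  assumes C: "category C" and "J \<noteq> {}" and X: "inverse_system C X" and p: "reindexing X Y p"
  shows "jmor C J leJ X Y p (jid_mor C Y)"
  unfolding jmor_def jid_mor_def
proof (intro conjI ballI impI)
  fix \<mu> assume "\<mu> \<in> Idx Y"
  then show "p \<mu> \<in> Idx X" using p unfolding reindexing_def by blast
next
  fix j \<mu> assume "\<mu> \<in> Idx Y"
  then show "hom C (Obj X (p \<mu>)) (Obj Y \<mu>) (Idm C (Obj Y \<mu>))"
    using p category_Idm_hom[OF C] inverse_system_Obj[OF X] unfolding reindexing_def by simp
next
  fix \<mu> \<mu>' assume \<mu>: "\<mu> \<in> Idx Y" "\<mu>' \<in> Idx Y" "Le Y \<mu> \<mu>'"
  then have in_X: "p \<mu> \<in> Idx X" "p \<mu>' \<in> Idx X" and le: "Le X (p \<mu>) (p \<mu>')"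
    and Obj: "Obj Y \<mu> = Obj X (p \<mu>)" "Obj Y \<mu>' = Obj X (p \<mu>')"
    and Bond: "Bond Y \<mu> \<mu>' = Bond X (p \<mu>) (p \<mu>')"
    using p unfolding reindexing_def by blast+
  have hom: "hom C (Obj X (p \<mu>')) (Obj X (p \<mu>)) (Bond X (p \<mu>) (p \<mu>'))"
    using inverse_system_Bond_hom[OF X in_X le] .
  have "Comp C (Idm C (Obj Y \<mu>)) (Bond X (p \<mu>) (p \<mu>')) =
        Comp C (Bond Y \<mu> \<mu>') (Comp C (Idm C (Obj Y \<mu>')) (Bond X (p \<mu>') (p \<mu>')))"
    using in_X Obj Bond hom inverse_system_Bond_refl[OF X]
      category_comp_Idm_left[OF C] category_comp_Idm_right[OF C]
    by (metis inverse_system_Bond_hom[OF X] inverse_system_Le_refl[OF X])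
  then show "\<exists>l\<in>Idx X. Le X (p \<mu>) l \<and> Le X (p \<mu>') l \<and>
      (\<exists>j0\<in>J. \<forall>j'\<in>J. leJ j0 j' \<longrightarrow>
        Comp C (Idm C (Obj Y \<mu>)) (Bond X (p \<mu>) l) =
        Comp C (Bond Y \<mu> \<mu>') (Comp C (Idm C (Obj Y \<mu>')) (Bond X (p \<mu>') l)))"
    using \<open>J \<noteq> {}\<close> in_X le inverse_system_Le_refl[OF X] bex_threshold_const by blast
qed

lemma jmor_section:
  assumes C: "category C" and "J \<noteq> {}" and X: "inverse_system C X" and Y: "inverse_system C Y"
    and p: "reindexing X Y p" and s: "\<And>l. l \<in> Idx X \<Longrightarrow> s l \<in> Idx Y \<and> p (s l) = l"
  shows "jmor C J leJ Y X s (jid_mor C X)"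
  unfolding jmor_def jid_mor_def
proof (intro conjI ballI impI)
  fix l assume "l \<in> Idx X"
  then show "s l \<in> Idx Y" using s by blast
next
  fix j l assume "l \<in> Idx X"
  then show "hom C (Obj Y (s l)) (Obj X l) (Idm C (Obj X l))"
    using s p category_Idm_hom[OF C] inverse_system_Obj[OF X] unfolding reindexing_def by metis
next
  fix l l' assume l: "l \<in> Idx X" "l' \<in> Idx X" "Le X l l'"
  obtain u where u: "u \<in> Idx Y" "Le Y (s l) u" "Le Y (s l') u"
    using inverse_system_upper_bound[OF Y] s l by meson
  have pu: "p u \<in> Idx X" "Le X l (p u)" "Le X l' (p u)"
    and Obj: "Obj Y (s l) = Obj X l" "Obj Y (s l') = Obj X l'"
    and Bond: "Bond Y (s l) u = Bond X l (p u)" "Bond Y (s l') u = Bond X l' (p u)"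
    using p s l u unfolding reindexing_def by metis+
  have "Comp C (Idm C (Obj X l)) (Bond X l (p u)) =
        Comp C (Bond X l l') (Comp C (Idm C (Obj X l')) (Bond X l' (p u)))"
    using l pu inverse_system_Bond_hom[OF X] inverse_system_Bond_comp[OF X]
      category_comp_Idm_left[OF C] by metis
  then show "\<exists>v\<in>Idx Y. Le Y (s l) v \<and> Le Y (s l') v \<and>
      (\<exists>j0\<in>J. \<forall>j'\<in>J. leJ j0 j' \<longrightarrow>
        Comp C (Idm C (Obj X l)) (Bond Y (s l) v) =
        Comp C (Bond X l l') (Comp C (Idm C (Obj X l')) (Bond Y (s l') v)))"
    using \<open>J \<noteq> {}\<close> u Bond bex_threshold_const by (metis (no_types, lifting))
qed

lemma jequiv_section_reindexing_id:
  assumes C: "category C" and "J \<noteq> {}" and X: "inverse_system C X"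
    and p: "reindexing X Y p" and s: "\<And>l. l \<in> Idx X \<Longrightarrow> s l \<in> Idx Y \<and> p (s l) = l"
  shows "jequiv C J leJ X X (jcomp_idx p s) (jcomp_mor C (jid_mor C Y) s (jid_mor C X))
           id (jid_mor C X)"
  unfolding jequiv_def jcomp_idx_def jcomp_mor_def jid_mor_def
proof
  fix l assume l: "l \<in> Idx X"
  then have "Obj Y (s l) = Obj X l" and "p (s l) = l"
    using p s unfolding reindexing_def by metis+
  moreover have "Comp C (Idm C (Obj X l)) (Idm C (Obj X l)) = Idm C (Obj X l)"
    using l category_comp_Idm_left[OF C] category_Idm_hom[OF C] inverse_system_Obj[OF X] by blast
  ultimately show "\<exists>u\<in>Idx X. Le X ((p \<circ> s) l) u \<and> Le X (id l) u \<and>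
      (\<exists>j0\<in>J. \<forall>j'\<in>J. leJ j0 j' \<longrightarrow>
        Comp C (Comp C (Idm C (Obj X l)) (Idm C (Obj Y (s l)))) (Bond X ((p \<circ> s) l) u) =
        Comp C (Idm C (Obj X l)) (Bond X (id l) u))"
    using \<open>J \<noteq> {}\<close> l inverse_system_Le_refl[OF X] by (auto intro!: bex_threshold_const)
qed

lemma jequiv_reindexing_section_id:
  assumes C: "category C" and "J \<noteq> {}" and X: "inverse_system C X" and Y: "inverse_system C Y"
    and p: "reindexing X Y p" and s: "\<And>l. l \<in> Idx X \<Longrightarrow> s l \<in> Idx Y \<and> p (s l) = l"
    and s_p_le: "\<And>\<mu>. \<mu> \<in> Idx Y \<Longrightarrow> Le Y (s (p \<mu>)) \<mu>"
  shows "jequiv C J leJ Y Y (jcomp_idx s p) (jcomp_mor C (jid_mor C X) p (jid_mor C Y))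
           id (jid_mor C Y)"
  unfolding jequiv_def jcomp_idx_def jcomp_mor_def jid_mor_def
proof
  fix \<mu> assume \<mu>: "\<mu> \<in> Idx Y"
  then have p\<mu>: "p \<mu> \<in> Idx X" "Obj Y \<mu> = Obj X (p \<mu>)"
    using p unfolding reindexing_def by blast+
  have Idm_hom: "hom C (Obj Y \<mu>) (Obj Y \<mu>) (Idm C (Obj Y \<mu>))"
    using \<mu> category_Idm_hom[OF C] inverse_system_Obj[OF Y] by blast
  have "Bond Y (s (p \<mu>)) \<mu> = Bond X (p \<mu>) (p \<mu>)"
    using p s s_p_le \<mu> p\<mu> unfolding reindexing_def by metis
  then have "Bond Y (s (p \<mu>)) \<mu> = Bond Y \<mu> \<mu>"
    using \<mu> p\<mu> inverse_system_Bond_refl[OF X] inverse_system_Bond_refl[OF Y] by simp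
  then show "\<exists>u\<in>Idx Y. Le Y ((s \<circ> p) \<mu>) u \<and> Le Y (id \<mu>) u \<and>
      (\<exists>j0\<in>J. \<forall>j'\<in>J. leJ j0 j' \<longrightarrow>
        Comp C (Comp C (Idm C (Obj Y \<mu>)) (Idm C (Obj X (p \<mu>)))) (Bond Y ((s \<circ> p) \<mu>) u) =
        Comp C (Idm C (Obj Y \<mu>)) (Bond Y (id \<mu>) u))"
    using \<open>J \<noteq> {}\<close> \<mu> p\<mu> s_p_le inverse_system_Le_refl[OF Y] category_comp_Idm_left[OF C Idm_hom]
    by (auto intro!: bexI[of _ \<mu>] bex_threshold_const)
qed

lemma iso_proJ_reindexing_section:
  assumes "category C" and "J \<noteq> {}" and "inverse_system C X" and "inverse_system C Y"
    and "reindexing X Y p" and "\<And>l. l \<in> Idx X \<Longrightarrow> s l \<in> Idx Y \<and> p (s l) = l"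
    and "\<And>\<mu>. \<mu> \<in> Idx Y \<Longrightarrow> Le Y (s (p \<mu>)) \<mu>"
  shows "iso_proJ C J leJ X Y"
  unfolding iso_proJ_def
  using jmor_reindexing[OF assms(1-3,5)] jmor_section[OF assms(1-6)]
    jequiv_section_reindexing_id[OF assms(1-3,5,6)] jequiv_reindexing_section_id[OF assms]
  by blast

definition list_system :: "('i, 'o, 'm) isys \<Rightarrow> ('i list, 'o, 'm) isys" where
  "list_system X = \<lparr>Idx = {xs. xs \<noteq> [] \<and> set xs \<subseteq> Idx X},
                    Le = (\<lambda>xs ys. subseq xs ys \<and> Le X (last xs) (last ys)),
                    Obj = (\<lambda>xs. Obj X (last xs)),
                    Bond = (\<lambda>xs ys. Bond X (last xs) (last ys))\<rparr>"

lemma list_system_simps [simp]: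
  "Idx (list_system X) = {xs. xs \<noteq> [] \<and> set xs \<subseteq> Idx X}"
  "Le (list_system X) xs ys \<longleftrightarrow> subseq xs ys \<and> Le X (last xs) (last ys)"
  "Obj (list_system X) xs = Obj X (last xs)"
  "Bond (list_system X) xs ys = Bond X (last xs) (last ys)"
  by (simp_all add: list_system_def)

lemma last_in_subset: "xs \<noteq> [] \<Longrightarrow> set xs \<subseteq> A \<Longrightarrow> last xs \<in> A"
  by auto

lemma cofinite_list_system: "cofinite_system (list_system X)"
  unfolding cofinite_system_def cofinite_set_def
proof
  fix xs
  have "{ys \<in> Idx (list_system X). Le (list_system X) ys xs} \<subseteq> set (subseqs xs)"
    by auto
  then show "finite {ys \<in> Idx (list_system X). Le (list_system X) ys xs}"
    by (rule finite_subset) simp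
qed

lemma inverse_system_list_system:
  assumes X: "inverse_system C X"
  shows "inverse_system C (list_system X)"
  unfolding inverse_system_def directed_preorder_def directed_def
proof (intro conjI ballI impI)
  obtain l where "l \<in> Idx X"
    using inverse_system_Idx_nonempty[OF X] by blast
  then show "Idx (list_system X) \<noteq> {}"
    by (auto intro!: exI[of _ "[l]"])
next
  fix xs ys assume xs_ys: "xs \<in> Idx (list_system X)" "ys \<in> Idx (list_system X)"
  then have "last xs \<in> Idx X" "last ys \<in> Idx X"
    by auto
  then obtain u where "u \<in> Idx X" "Le X (last xs) u" "Le X (last ys) u"
    using inverse_system_upper_bound[OF X] by blast
  with xs_ys show "\<exists>zs\<in>Idx (list_system X).
      Le (list_system X) xs zs \<and> Le (list_system X) ys zs"
    by (intro bexI[of _ "xs @ ys @ [u]"]) (auto simp: subseq_rev_drop_many)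
next
  fix xs ys zs assume "xs \<in> Idx (list_system X)" "ys \<in> Idx (list_system X)"
    "zs \<in> Idx (list_system X)" "Le (list_system X) xs ys" "Le (list_system X) ys zs"
  moreover from this have "last xs \<in> Idx X" "last ys \<in> Idx X" "last zs \<in> Idx X"
    by auto
  ultimately show "Le (list_system X) xs zs"
    using inverse_system_Le_trans[OF X, of "last xs" "last ys" "last zs"]
    by (auto intro: subseq_order.order_trans)
qed (use X in \<open>auto simp: last_in_subset inverse_system_Le_refl inverse_system_Obj inverse_system_Bond_hom
                            inverse_system_Bond_refl inverse_system_Bond_comp\<close>)

lemma reindexing_list_system_last: "reindexing X (list_system X) last"
  unfolding reindexing_def by auto

lemma list_system_singleton_last_le:
  "inverse_system C X \<Longrightarrow> xs \<in> Idx (list_system X) \<Longrightarrow> Le (list_system X) [last xs] xs"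
  by (simp add: subseq_singleton_left last_in_subset inverse_system_Le_refl)

theorem corollary1:
  fixes C :: "('o, 'm) cat" and J :: "'j set" and leJ :: "'j \<Rightarrow> 'j \<Rightarrow> bool"
    and X :: "('i, 'o, 'm) isys"
  assumes "category C"
    and "directed_poset J leJ"
    and "inverse_system C X"
  shows "\<exists>X' :: ('i list, 'o, 'm) isys.
           inverse_system C X' \<and> cofinite_system X' \<and> iso_proJ C J leJ X X'"
proof (intro exI conjI)
  show "inverse_system C (list_system X)"
    using assms(3) by (rule inverse_system_list_system)
  show "cofinite_system (list_system X)"
    by (rule cofinite_list_system)
  show "iso_proJ C J leJ X (list_system X)"
  proof (rule iso_proJ_reindexing_section[where p = last and s = "\<lambda>l. [l]"])
    show "J \<noteq> {}"
      using assms(2) by (rule directed_poset_nonempty)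
    show "Le (list_system X) [last xs] xs" if "xs \<in> Idx (list_system X)" for xs
      using assms(3) that by (rule list_system_singleton_last_le)
  qed (use assms(1,3) inverse_system_list_system reindexing_list_system_last in auto)
qed

end
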